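(* Let $\kappa$ be a standard kernel, let $F$ be a fixed finite simple graph on vertex set $\{1,\dots,k\}$ with edge set $E(F)$, let $H$ be a fixed graph on vertex set $\{1,\dots,n\}$ ($n\ge k$, $n\ge2$) with $m$ edges, and let $x=(x_1,\dots,x_n)\in[0,1]^n$ be fixed. Define $$T_F(z_1,\dots,z_k)=\prod_{\{i,j\}\in E(F)}\kappa(z_i,z_j),\qquad \mu_F(x)=\frac1{(n)_k}\sum_{(i_1,\dots,i_k)}T_F(x_{i_1},\dots,x_{i_k}),$$ where the sum runs over all $k$-tuples of pairwise distinct indices in $\{1,\dots,n\}$. Then for every $\varepsilon>m\frac{k(k-1)}{n(n-1)}$, $$\mathbb{P}\big[|t(F,G(x,H,\kappa))-\mu_F(x)|>\varepsilon\big]\le 2\exp\left(-\frac{2\big(\varepsilon-m\frac{k(k-1)}{n(n-1)}\big)^2}{\big(\binom n2-m\big)\big(\frac{k(k-1)}{n(n-1)}\big)^2}\right).$$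
   Context: A standard kernel is a measurable symmetric function $\kappa:[0,1]^2\to[0,1]$. $(n)_k=n(n-1)\cdots(n-k+1)$. For graphs $F$ on $k$ vertices and $G$ on $n$ vertices, $t(F,G)=|\mathrm{inj}(F,G)|/(n)_k$, where $\mathrm{inj}(F,G)$ is the set of injective maps from vertices of $F$ to vertices of $G$ mapping edges to edges. The random graph $G(x,H,\kappa)$ on $\{1,\dots,n\}$: each edge $\{i,j\}$ of $H$ is present; each non-edge $\{i,j\}$ of $H$ is present independently with probability $\kappa(x_i,x_j)$. *)

theory Defs
  imports "HOL-Probability.Probability"
begin

definition simple_graph_on :: "nat set \<Rightarrow> nat set set \<Rightarrow> bool" where
  "simple_graph_on V E \<longleftrightarrow> (\<forall>e\<in>E. e \<subseteq> V \<and> card e = 2)"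

definition standard_kernel :: "(real \<Rightarrow> real \<Rightarrow> real) \<Rightarrow> bool" where
  "standard_kernel \<kappa> \<longleftrightarrow>
     (\<lambda>(a,b). \<kappa> a b) \<in> borel_measurable (restrict_space borel ({0..1} \<times> {0..1})) \<and>
     (\<forall>a\<in>{0..1}. \<forall>b\<in>{0..1}. \<kappa> a b = \<kappa> b a \<and> 0 \<le> \<kappa> a b \<and> \<kappa> a b \<le> 1)"

definition falling :: "nat \<Rightarrow> nat \<Rightarrow> real" where
  "falling n k = (\<Prod>i<k. real n - real i)"

definition inj_hom :: "nat \<Rightarrow> nat set set \<Rightarrow> nat \<Rightarrow> nat set set \<Rightarrow> (nat \<Rightarrow> nat) set" where
  "inj_hom k EF n EG = {f \<in> {1..k} \<rightarrow>\<^sub>E {1..n}. inj_on f {1..k} \<and> (\<forall>e\<in>EF. f ` e \<in> EG)}"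

definition hom_density :: "nat \<Rightarrow> nat set set \<Rightarrow> nat \<Rightarrow> nat set set \<Rightarrow> real" where
  "hom_density k EF n EG = real (card (inj_hom k EF n EG)) / falling n k"

definition edge_val :: "(real \<Rightarrow> real \<Rightarrow> real) \<Rightarrow> (nat \<Rightarrow> real) \<Rightarrow> nat set \<Rightarrow> real" where
  "edge_val \<kappa> z e = \<kappa> (z (Min e)) (z (Max e))"

definition T_F :: "(real \<Rightarrow> real \<Rightarrow> real) \<Rightarrow> nat set set \<Rightarrow> (nat \<Rightarrow> real) \<Rightarrow> real" where
  "T_F \<kappa> EF z = (\<Prod>e\<in>EF. edge_val \<kappa> z e)"

definition mu_F :: "(real \<Rightarrow> real \<Rightarrow> real) \<Rightarrow> nat \<Rightarrow> nat set set \<Rightarrow> nat \<Rightarrow> (nat \<Rightarrow> real) \<Rightarrow> real" where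
  "mu_F \<kappa> k EF n x =
     (\<Sum>f\<in>{f \<in> {1..k} \<rightarrow>\<^sub>E {1..n}. inj_on f {1..k}}. T_F \<kappa> EF (x \<circ> f)) / falling n k"

definition all_pairs :: "nat \<Rightarrow> nat set set" where
  "all_pairs n = {e. e \<subseteq> {1..n} \<and> card e = 2}"

text \<open>The random graph G(x,H,kappa), as a distribution on edge sets: edges of H are present,
  every non-edge e = {i,j} of H is present independently with probability kappa(x_i,x_j).\<close>
definition random_graph :: "nat \<Rightarrow> (nat \<Rightarrow> real) \<Rightarrow> nat set set \<Rightarrow> (real \<Rightarrow> real \<Rightarrow> real)
    \<Rightarrow> nat set set pmf" where
  "random_graph n x EH \<kappa> =
     map_pmf (\<lambda>c. EH \<union> {e \<in> all_pairs n - EH. c e})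
       (Pi_pmf (all_pairs n - EH) False (\<lambda>e. bernoulli_pmf (edge_val \<kappa> x e)))"

end

theory Submission
  imports Defs
begin

text \<open>The random graph is a function of the independent indicators of the
  \<open>(n choose 2) - m\<close> non-edges of \<open>H\<close>. Switching one pair \<open>h\<close> on or off changes
  \<open>t(F,G)\<close> only through the injections mapping an edge of \<open>F\<close> onto \<open>h\<close>; since all pairs
  are alike under relabelling, these form at most a \<open>k(k-1)/(n(n-1))\<close> fraction of all
  injections, and McDiarmid's inequality concentrates \<open>t(F,G)\<close> around its mean. The mean
  is the average over injections \<open>\<phi>\<close> of the product of \<open>\<kappa>\<close> over the edges of \<open>\<phi>(F)\<close>
  outside \<open>H\<close>, which differs from \<open>T_F(x \<circ> \<phi>)\<close> only if \<open>\<phi>\<close> maps an edge of \<open>F\<close> onto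
  one of the \<open>m\<close> edges of \<open>H\<close>: a fraction of at most \<open>m k(k-1)/(n(n-1))\<close>.\<close>

section \<open>McDiarmid's inequality for independent bits\<close>

lemma expectation_bind_pmf_finite:
  fixes f :: "'b \<Rightarrow> real"
  assumes M: "finite (set_pmf M)" and N: "\<And>x. x \<in> set_pmf M \<Longrightarrow> finite (set_pmf (N x))"
  shows "measure_pmf.expectation (bind_pmf M N) f =
         measure_pmf.expectation M (\<lambda>x. measure_pmf.expectation (N x) f)"
proof -
  define S where "S = (\<Union>x\<in>set_pmf M. set_pmf (N x))"
  have S: "finite S" using M N by (auto simp: S_def)
  have pmf_bind_sum: "pmf (bind_pmf M N) z = (\<Sum>x\<in>set_pmf M. pmf (N x) z * pmf M x)" for z
    unfolding pmf_bind by (rule integral_measure_pmf_real[OF M]) auto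
  have "measure_pmf.expectation (bind_pmf M N) f = (\<Sum>z\<in>S. f z * pmf (bind_pmf M N) z)"
    by (rule integral_measure_pmf_real[OF S]) (auto simp: S_def)
  also have "\<dots> = (\<Sum>x\<in>set_pmf M. (\<Sum>z\<in>S. f z * pmf (N x) z) * pmf M x)"
    unfolding pmf_bind_sum by (simp add: sum_distrib_left sum_distrib_right mult.assoc sum.swap[of _ S])
  also have "\<dots> = (\<Sum>x\<in>set_pmf M. measure_pmf.expectation (N x) f * pmf M x)"
  proof (rule sum.cong[OF refl])
    fix x assume x: "x \<in> set_pmf M"
    have "measure_pmf.expectation (N x) f = (\<Sum>z\<in>S. f z * pmf (N x) z)"
      by (rule integral_measure_pmf_real[OF S]) (use x in \<open>auto simp: S_def\<close>)
    then show "(\<Sum>z\<in>S. f z * pmf (N x) z) * pmf M x = measure_pmf.expectation (N x) f * pmf M x"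
      by simp
  qed
  also have "\<dots> = measure_pmf.expectation M (\<lambda>x. measure_pmf.expectation (N x) f)"
    by (rule integral_measure_pmf_real[OF M, symmetric]) auto
  finally show ?thesis .
qed

lemma Hoeffdings_lemma_bool:
  fixes h :: "bool \<Rightarrow> real" and p :: "bool pmf"
  assumes "l > 0" "\<bar>h True - h False\<bar> \<le> c"
  shows "(\<integral>\<^sup>+y. ennreal (exp (l * (h y - measure_pmf.expectation p h))) \<partial>p)
           \<le> ennreal (exp (l\<^sup>2 * c\<^sup>2 / 8))"
proof -
  define lo where "lo = min (h False) (h True)"
  define hi where "hi = max (h False) (h True)"
  interpret interval_bounded_random_variable "measure_pmf p" h lo hi
  proof unfold_locales
    have "h y \<in> {lo..hi}" for y by (cases y) (auto simp: lo_def hi_def)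
    then show "AE x in measure_pmf p. h x \<in> {lo..hi}" by (intro AE_I2)
  qed auto
  have "(\<integral>\<^sup>+y. ennreal (exp (l * (h y - measure_pmf.expectation p h))) \<partial>p)
      \<le> ennreal (exp (l\<^sup>2 * (hi - lo)\<^sup>2 / 8))"
    using Hoeffdings_lemma_nn_integral[OF assms(1)] by simp
  also have "\<dots> \<le> ennreal (exp (l\<^sup>2 * c\<^sup>2 / 8))"
    using assms(2) by (intro ennreal_leI)
      (auto simp: hi_def lo_def intro!: mult_left_mono power_mono divide_right_mono)
  finally show ?thesis .
qed

lemma mgf_Pi_pmf_bounded_differences:
  fixes f :: "('a \<Rightarrow> bool) \<Rightarrow> real" and q :: "'a \<Rightarrow> bool pmf"
  assumes "finite A" "l > 0"
    and "\<And>g a y. a \<in> A \<Longrightarrow> \<bar>f (g(a:=y)) - f g\<bar> \<le> c a"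
  shows "(\<integral>\<^sup>+g. ennreal (exp (l * (f g - measure_pmf.expectation (Pi_pmf A d q) f))) \<partial>Pi_pmf A d q)
          \<le> ennreal (exp (l\<^sup>2 * (\<Sum>a\<in>A. (c a)\<^sup>2) / 8))"
  using assms(1,3)
proof (induction A arbitrary: f rule: finite_induct)
  case empty
  then show ?case by simp
next
  case (insert a A f)
  have Pi_insert: "Pi_pmf (insert a A) d q = bind_pmf (q a) (\<lambda>y. map_pmf (\<lambda>g. g(a:=y)) (Pi_pmf A d q))"
    using Pi_pmf_insert'[OF insert(1,2)] by (simp add: map_pmf_def)
  define fy where "fy y g = f (g(a:=y))" for y g
  \<comment> \<open>\<open>h y\<close> is the conditional mean of \<open>f\<close> given that coordinate \<open>a\<close> is \<open>y\<close>;
      it varies by at most \<open>c a\<close>, so Hoeffding's lemma applies to it.\<close>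
  define h where "h y = measure_pmf.expectation (Pi_pmf A d q) (fy y)" for y
  define E where "E = measure_pmf.expectation (Pi_pmf (insert a A) d q) f"
  define C where "C = ennreal (exp (l\<^sup>2 * (\<Sum>a\<in>A. (c a)\<^sup>2) / 8))"
  have finA: "finite (set_pmf (Pi_pmf A d q))"
    using insert(1) by (simp add: set_Pi_pmf finite_PiE_dflt)
  have E: "E = measure_pmf.expectation (q a) h"
    unfolding E_def h_def fy_def Pi_insert
    by (subst expectation_bind_pmf_finite) (use finA in auto)
  have IH: "(\<integral>\<^sup>+g. ennreal (exp (l * (fy y g - h y))) \<partial>Pi_pmf A d q) \<le> C" for y
    unfolding h_def C_def
  proof (rule insert.IH)
    fix g b z assume b: "b \<in> A"
    then have "g(b:=z, a:=y) = (g(a:=y))(b:=z)" using insert(2) by (auto simp: fun_eq_iff)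
    then show "\<bar>fy y (g(b:=z)) - fy y g\<bar> \<le> c b"
      unfolding fy_def by (simp only:) (rule insert.prems, use b in simp)
  qed
  have "\<bar>h True - h False\<bar> \<le> c a"
  proof -
    have "\<bar>fy True g - fy False g\<bar> \<le> c a" for g
    proof -
      have "fy True g = f ((g(a:=False))(a:=True))" "fy False g = f (g(a:=False))"
        by (simp_all only: fy_def fun_upd_upd)
      then show ?thesis by (simp only:) (rule insert.prems, simp)
    qed
    then have "\<bar>measure_pmf.expectation (Pi_pmf A d q) (\<lambda>g. fy True g - fy False g)\<bar>
        \<le> measure_pmf.expectation (Pi_pmf A d q) (\<lambda>g. c a)"
      by (intro order.trans[OF integral_abs_bound] integral_mono)
        (auto intro: integrable_measure_pmf_finite[OF finA])
    moreover have "measure_pmf.expectation (Pi_pmf A d q) (\<lambda>g. fy True g - fy False g) = h True - h False"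
      unfolding h_def by (rule Bochner_Integration.integral_diff)
        (auto intro: integrable_measure_pmf_finite[OF finA])
    ultimately show ?thesis by simp
  qed
  then have Hoeffding: "(\<integral>\<^sup>+y. ennreal (exp (l * (h y - E))) \<partial>q a) \<le> ennreal (exp (l\<^sup>2 * (c a)\<^sup>2 / 8))"
    unfolding E by (rule Hoeffdings_lemma_bool[OF assms(2)])
  have "(\<integral>\<^sup>+g. ennreal (exp (l * (f g - E))) \<partial>Pi_pmf (insert a A) d q)
      = (\<integral>\<^sup>+y. (\<integral>\<^sup>+g. ennreal (exp (l * (fy y g - h y))) * ennreal (exp (l * (h y - E))) \<partial>Pi_pmf A d q) \<partial>q a)"
    unfolding Pi_insert
    by (simp add: fy_def ennreal_mult'[symmetric] exp_add[symmetric] algebra_simps)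
  also have "\<dots> = (\<integral>\<^sup>+y. (\<integral>\<^sup>+g. ennreal (exp (l * (fy y g - h y))) \<partial>Pi_pmf A d q) * ennreal (exp (l * (h y - E))) \<partial>q a)"
    by (simp add: nn_integral_multc)
  also have "\<dots> \<le> (\<integral>\<^sup>+y. C * ennreal (exp (l * (h y - E))) \<partial>q a)"
    by (intro nn_integral_mono mult_right_mono IH) auto
  also have "\<dots> = C * (\<integral>\<^sup>+y. ennreal (exp (l * (h y - E))) \<partial>q a)"
    by (simp add: nn_integral_cmult)
  also have "\<dots> \<le> C * ennreal (exp (l\<^sup>2 * (c a)\<^sup>2 / 8))"
    by (intro mult_left_mono Hoeffding) auto
  also have "\<dots> = ennreal (exp (l\<^sup>2 * (\<Sum>a\<in>insert a A. (c a)\<^sup>2) / 8))"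
    using insert by (simp add: C_def ennreal_mult'[symmetric] exp_add[symmetric] add_divide_distrib algebra_simps)
  finally show ?case unfolding E_def .
qed

lemma Pi_pmf_upper_tail_bounded_differences:
  fixes f :: "('a \<Rightarrow> bool) \<Rightarrow> real" and q :: "'a \<Rightarrow> bool pmf"
  assumes "finite A" "t > 0" "(\<Sum>a\<in>A. (c a)\<^sup>2) > 0"
    and "\<And>g a y. a \<in> A \<Longrightarrow> \<bar>f (g(a:=y)) - f g\<bar> \<le> c a"
  shows "measure_pmf.prob (Pi_pmf A d q) {g. f g - measure_pmf.expectation (Pi_pmf A d q) f \<ge> t}
          \<le> exp (- 2 * t\<^sup>2 / (\<Sum>a\<in>A. (c a)\<^sup>2))"
proof -
  define M where "M = Pi_pmf A d q"
  define E where "E = measure_pmf.expectation M f"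
  define S where "S = (\<Sum>a\<in>A. (c a)\<^sup>2)"
  define l where "l = 4 * t / S" \<comment> \<open>minimises \<open>- l t + l\<^sup>2 S / 8\<close>\<close>
  have l: "l > 0" using assms(2,3) by (simp add: l_def S_def)
  have "emeasure M {g. f g - E \<ge> t} = (\<integral>\<^sup>+g. indicator {g. f g - E \<ge> t} g \<partial>M)"
    by simp
  also have "\<dots> \<le> (\<integral>\<^sup>+g. ennreal (exp (- (l * t))) * ennreal (exp (l * (f g - E))) \<partial>M)"
  proof (intro nn_integral_mono)
    fix g
    have "1 \<le> exp (- (l * t)) * exp (l * (f g - E))" if "f g - E \<ge> t"
      using mult_left_mono[OF that less_imp_le[OF l]] by (simp add: exp_add[symmetric])
    then show "indicator {g. f g - E \<ge> t} g \<le> ennreal (exp (- (l * t))) * ennreal (exp (l * (f g - E)))"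
      by (auto simp: indicator_def ennreal_mult'[symmetric])
  qed
  also have "\<dots> = ennreal (exp (- (l * t))) * (\<integral>\<^sup>+g. ennreal (exp (l * (f g - E))) \<partial>M)"
    by (simp add: nn_integral_cmult)
  also have "\<dots> \<le> ennreal (exp (- (l * t))) * ennreal (exp (l\<^sup>2 * S / 8))"
    unfolding M_def E_def S_def
    by (intro mult_left_mono mgf_Pi_pmf_bounded_differences[OF assms(1) l assms(4)]) auto
  also have "\<dots> = ennreal (exp (- 2 * t\<^sup>2 / S))"
  proof -
    have "- (l * t) + l\<^sup>2 * S / 8 = - 2 * t\<^sup>2 / S"
      using assms(3) by (simp add: l_def S_def power2_eq_square field_simps)
    then show ?thesis by (simp add: ennreal_mult'[symmetric] exp_add[symmetric])
  qed
  finally show ?thesis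
    by (simp add: M_def E_def S_def measure_pmf.emeasure_eq_measure)
qed

theorem McDiarmid_Pi_pmf_bool:
  fixes f :: "('a \<Rightarrow> bool) \<Rightarrow> real" and q :: "'a \<Rightarrow> bool pmf"
  assumes "finite A" "t > 0"
    and "\<And>g a y. a \<in> A \<Longrightarrow> \<bar>f (g(a:=y)) - f g\<bar> \<le> c a"
  shows "measure_pmf.prob (Pi_pmf A d q) {g. \<bar>f g - measure_pmf.expectation (Pi_pmf A d q) f\<bar> \<ge> t}
          \<le> 2 * exp (- 2 * t\<^sup>2 / (\<Sum>a\<in>A. (c a)\<^sup>2))"
proof (cases "(\<Sum>a\<in>A. (c a)\<^sup>2) > 0")
  case False
  \<comment> \<open>then the exponent is a division by zero, and the bound is the trivial \<open>2\<close>\<close>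
  then have "(\<Sum>a\<in>A. (c a)\<^sup>2) = 0" using sum_nonneg[of A "\<lambda>a. (c a)\<^sup>2"] by simp
  then show ?thesis using measure_pmf.prob_le_1 by (simp add: order.trans[OF _ one_le_numeral])
next
  case True
  define M where "M = Pi_pmf A d q"
  define E where "E = measure_pmf.expectation M f"
  have upper: "measure_pmf.prob M {g. f g - E \<ge> t} \<le> exp (- 2 * t\<^sup>2 / (\<Sum>a\<in>A. (c a)\<^sup>2))"
    unfolding M_def E_def by (rule Pi_pmf_upper_tail_bounded_differences[OF assms(1,2) True assms(3)])
  have "\<bar>- f (g(a:=y)) - - f g\<bar> \<le> c a" if "a \<in> A" for g a y
    using assms(3)[OF that, of g y] by linarith
  from Pi_pmf_upper_tail_bounded_differences[OF assms(1,2) True this]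
  have lower: "measure_pmf.prob M {g. - f g - (- E) \<ge> t} \<le> exp (- 2 * t\<^sup>2 / (\<Sum>a\<in>A. (c a)\<^sup>2))"
    by (simp add: M_def E_def)
  have "measure_pmf.prob M {g. \<bar>f g - E\<bar> \<ge> t}
      \<le> measure_pmf.prob M ({g. f g - E \<ge> t} \<union> {g. - f g - (- E) \<ge> t})"
    by (intro measure_pmf.finite_measure_mono) auto
  also have "\<dots> \<le> measure_pmf.prob M {g. f g - E \<ge> t} + measure_pmf.prob M {g. - f g - (- E) \<ge> t}"
    by (rule measure_Un_le) auto
  finally show ?thesis using upper lower by (simp add: M_def E_def)
qed


section \<open>Injections and homomorphism densities\<close>

definition injections :: "nat \<Rightarrow> nat \<Rightarrow> (nat \<Rightarrow> nat) set" where
  "injections k n = {f \<in> {1..k} \<rightarrow>\<^sub>E {1..n}. inj_on f {1..k}}"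

lemma finite_injections: "finite (injections k n)"
  unfolding injections_def by (rule finite_subset[OF _ finite_PiE[of "{1..k}" "\<lambda>_. {1..n}"]]) auto

lemma injectionsD:
  assumes "\<phi> \<in> injections k n"
  shows "\<phi> ` {1..k} \<subseteq> {1..n}" "inj_on \<phi> {1..k}"
  using assms PiE_mem unfolding injections_def by blast+

lemma card_injections:
  assumes "k \<le> n"
  shows "real (card (injections k n)) = falling n k"
proof -
  have "card (injections k n) = (\<Prod>i\<in>{0..<k}. n - i)"
    using card_inj_on_subset_funcset[of "{1..k}" "{1..n}" "{1..k}"] by (simp add: injections_def)
  then show ?thesis
    using assms by (simp add: falling_def atLeast0LessThan of_nat_diff)
qed

lemma falling_pos: "k \<le> n \<Longrightarrow> falling n k > 0"
  unfolding falling_def by (intro prod_pos) auto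

lemma real_choose_two: "real (n choose 2) = real n * (real n - 1) / 2"
  by (cases n) (auto simp: choose_two real_of_nat_div algebra_simps)

lemma card_simple_graph_edges:
  assumes "simple_graph_on {1..k} EF"
  shows "finite EF" "card EF \<le> k choose 2"
proof -
  have sub: "EF \<subseteq> {e. e \<subseteq> {1..k} \<and> card e = 2}"
    using assms by (auto simp: simple_graph_on_def)
  have fin: "finite {e. e \<subseteq> {1..k} \<and> card e = 2}"
    by (rule finite_subset[of _ "Pow {1..k}"]) auto
  show "finite EF" using finite_subset[OF sub fin] .
  show "card EF \<le> k choose 2"
    using card_mono[OF fin sub] n_subsets[of "{1..k}" 2] by simp
qed

lemma finite_all_pairs: "finite (all_pairs n)"
  unfolding all_pairs_def by (rule finite_subset[of _ "Pow {1..n}"]) auto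

lemma card_all_pairs: "card (all_pairs n) = n choose 2"
  unfolding all_pairs_def using n_subsets[of "{1..n}" 2] by simp

lemma image_pair_in_all_pairs:
  assumes "\<phi> \<in> injections k n" "e \<subseteq> {1..k}" "card e = 2"
  shows "\<phi> ` e \<in> all_pairs n"
proof -
  have "inj_on \<phi> e" using injectionsD(2)[OF assms(1)] assms(2) by (rule inj_on_subset)
  then show ?thesis
    using injectionsD(1)[OF assms(1)] assms(2,3) by (auto simp: all_pairs_def card_image)
qed

lemma bij_betw_mapping_subset:
  assumes "finite S" "h \<subseteq> S" "h' \<subseteq> S" "card h = card h'"
  obtains \<sigma> where "bij_betw \<sigma> S S" "\<sigma> ` h = h'"
proof -
  have fin: "finite h" "finite h'" using assms(1-3) by (auto intro: finite_subset)
  obtain \<sigma>1 where \<sigma>1: "bij_betw \<sigma>1 h h'"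
    using finite_same_card_bij[OF fin assms(4)] by blast
  have "card (S - h) = card (S - h')"
    using assms fin by (simp add: card_Diff_subset)
  moreover have "finite (S - h)" "finite (S - h')" using assms(1) by auto
  ultimately obtain \<sigma>2 where \<sigma>2: "bij_betw \<sigma>2 (S - h) (S - h')"
    using finite_same_card_bij by metis
  define \<sigma> where "\<sigma> x = (if x \<in> h then \<sigma>1 x else \<sigma>2 x)" for x
  have "bij_betw \<sigma> (h \<union> (S - h)) (h' \<union> (S - h'))"
    unfolding \<sigma>_def by (rule bij_betw_disjoint_Un[OF \<sigma>1 \<sigma>2]) blast+
  moreover have "h \<union> (S - h) = S" "h' \<union> (S - h') = S" using assms(2,3) by blast+
  ultimately have "bij_betw \<sigma> S S" by simp
  moreover have "\<sigma> ` h = h'"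
    using bij_betw_imp_surj_on[OF \<sigma>1] by (simp add: \<sigma>_def)
  ultimately show ?thesis by (rule that)
qed

definition pair_fiber :: "nat \<Rightarrow> nat \<Rightarrow> nat set \<Rightarrow> nat set \<Rightarrow> (nat \<Rightarrow> nat) set" where
  "pair_fiber k n e h = {\<phi> \<in> injections k n. \<phi> ` e = h}"

lemma finite_pair_fiber: "finite (pair_fiber k n e h)"
  unfolding pair_fiber_def using finite_injections by simp

lemma card_pair_fiber_mono:
  assumes "e \<subseteq> {1..k}" "h \<in> all_pairs n" "h' \<in> all_pairs n"
  shows "card (pair_fiber k n e h) \<le> card (pair_fiber k n e h')"
proof -
  obtain \<sigma> where \<sigma>: "bij_betw \<sigma> {1..n} {1..n}" "\<sigma> ` h = h'"
    using bij_betw_mapping_subset[of "{1..n}" h h'] assms(2,3) by (auto simp: all_pairs_def)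
  define \<Psi> where "\<Psi> \<phi> = restrict (\<sigma> \<circ> \<phi>) {1..k}" for \<phi> :: "nat \<Rightarrow> nat"
  have "\<Psi> \<phi> \<in> pair_fiber k n e h'" if "\<phi> \<in> pair_fiber k n e h" for \<phi>
  proof -
    have \<phi>: "\<phi> ` {1..k} \<subseteq> {1..n}" "inj_on \<phi> {1..k}" "\<phi> ` e = h"
      using that injectionsD by (auto simp: pair_fiber_def)
    have "\<sigma> (\<phi> i) \<in> {1..n}" if "i \<in> {1..k}" for i
      using \<phi>(1) that bij_betw_apply[OF \<sigma>(1)] by blast
    then have "\<Psi> \<phi> \<in> {1..k} \<rightarrow>\<^sub>E {1..n}"
      by (simp add: \<Psi>_def)
    moreover have "inj_on (\<sigma> \<circ> \<phi>) {1..k}"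
      using \<phi>(2) inj_on_subset[OF bij_betw_imp_inj_on[OF \<sigma>(1)] \<phi>(1)] by (rule comp_inj_on)
    then have "inj_on (\<Psi> \<phi>) {1..k}"
      by (simp add: \<Psi>_def inj_on_restrict_eq)
    moreover have "\<Psi> \<phi> ` e = \<sigma> ` \<phi> ` e"
      using assms(1) by (auto simp: \<Psi>_def)
    ultimately show ?thesis using \<phi>(3) \<sigma>(2) by (simp add: pair_fiber_def injections_def)
  qed
  moreover have "inj_on \<Psi> (pair_fiber k n e h)"
  proof (rule inj_onI)
    fix \<phi>1 \<phi>2 assume \<phi>: "\<phi>1 \<in> pair_fiber k n e h" "\<phi>2 \<in> pair_fiber k n e h" "\<Psi> \<phi>1 = \<Psi> \<phi>2"
    then have ext: "\<phi>1 \<in> {1..k} \<rightarrow>\<^sub>E {1..n}" "\<phi>2 \<in> {1..k} \<rightarrow>\<^sub>E {1..n}"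
      by (auto simp: pair_fiber_def injections_def)
    show "\<phi>1 = \<phi>2"
    proof (rule PiE_ext[OF ext])
      fix i assume i: "i \<in> {1..k}"
      then have "\<sigma> (\<phi>1 i) = \<sigma> (\<phi>2 i)" using fun_cong[OF \<phi>(3), of i] by (simp add: \<Psi>_def)
      moreover have "\<phi>1 i \<in> {1..n}" "\<phi>2 i \<in> {1..n}"
        using PiE_mem[OF ext(1) i] PiE_mem[OF ext(2) i] .
      ultimately show "\<phi>1 i = \<phi>2 i"
        using inj_onD[OF bij_betw_imp_inj_on[OF \<sigma>(1)]] by blast
    qed
  qed
  ultimately show ?thesis by (intro card_inj_on_le finite_pair_fiber) blast+
qed

lemma card_pair_fiber:
  assumes "e \<subseteq> {1..k}" "card e = 2" "k \<le> n" "h \<in> all_pairs n"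
  shows "real (card (pair_fiber k n e h)) * real (n choose 2) = falling n k"
proof -
  have "injections k n = (\<Union>h'\<in>all_pairs n. pair_fiber k n e h')"
    using image_pair_in_all_pairs[OF _ assms(1,2)] by (auto simp: pair_fiber_def)
  then have "card (injections k n) = (\<Sum>h'\<in>all_pairs n. card (pair_fiber k n e h'))"
    using finite_all_pairs finite_pair_fiber
    by (simp only:) (intro card_UN_disjoint; auto simp: pair_fiber_def)
  also have "\<dots> = (\<Sum>h'\<in>all_pairs n. card (pair_fiber k n e h))"
  proof (rule sum.cong[OF refl])
    fix h' assume "h' \<in> all_pairs n"
    then show "card (pair_fiber k n e h') = card (pair_fiber k n e h)"
      using card_pair_fiber_mono[OF assms(1)] assms(4) by (meson le_antisym)
  qed
  finally show ?thesis
    using card_injections[OF assms(3)] by (simp add: card_all_pairs mult.commute)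
qed

definition hitting_injections :: "nat \<Rightarrow> nat set set \<Rightarrow> nat \<Rightarrow> nat set \<Rightarrow> (nat \<Rightarrow> nat) set" where
  "hitting_injections k EF n h = {\<phi> \<in> injections k n. \<exists>e\<in>EF. \<phi> ` e = h}"

lemma card_hitting_injections:
  assumes "simple_graph_on {1..k} EF" "k \<le> n" "2 \<le> n" "h \<in> all_pairs n"
  shows "real (card (hitting_injections k EF n h))
           \<le> real k * (real k - 1) / (real n * (real n - 1)) * falling n k"
proof -
  have EF: "finite EF" "card EF \<le> k choose 2"
    using card_simple_graph_edges[OF assms(1)] by auto
  have fiber: "real (card (pair_fiber k n e h)) = falling n k / real (n choose 2)" if "e \<in> EF" for e
    using card_pair_fiber[of e k n h] that assms by (auto simp: simple_graph_on_def field_simps)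
  have "hitting_injections k EF n h = (\<Union>e\<in>EF. pair_fiber k n e h)"
    by (auto simp: hitting_injections_def pair_fiber_def)
  then have "real (card (hitting_injections k EF n h)) \<le> (\<Sum>e\<in>EF. real (card (pair_fiber k n e h)))"
    using card_UN_le[OF EF(1)] of_nat_le_iff by (metis of_nat_sum)
  also have "\<dots> = real (card EF) * falling n k / real (n choose 2)"
    using fiber by simp
  also have "\<dots> \<le> real (k choose 2) * falling n k / real (n choose 2)"
    using EF(2) falling_pos[OF assms(2)] by (intro divide_right_mono mult_right_mono) auto
  also have "\<dots> = real k * (real k - 1) / (real n * (real n - 1)) * falling n k"
    using assms(3) by (simp add: real_choose_two field_simps)
  finally show ?thesis .
qed

lemma inj_hom_eq: "inj_hom k EF n G = {\<phi> \<in> injections k n. \<forall>e\<in>EF. \<phi> ` e \<in> G}"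
  unfolding inj_hom_def injections_def by auto

lemma abs_card_diff_le:
  assumes "finite A" "finite B" "finite C" "A - C = B - C"
  shows "\<bar>real (card A) - real (card B)\<bar> \<le> real (card C)"
proof -
  have "card A = card (A - C) + card (A \<inter> C)" "card B = card (B - C) + card (B \<inter> C)"
    using assms(1,2) card_Int_Diff by (metis add.commute)+
  moreover have "card (A \<inter> C) \<le> card C" "card (B \<inter> C) \<le> card C"
    using assms(3) by (auto intro: card_mono)
  ultimately show ?thesis using assms(4) by simp
qed

lemma hom_density_change_pair:
  assumes "simple_graph_on {1..k} EF" "k \<le> n" "2 \<le> n" "h \<in> all_pairs n" "G - {h} = G' - {h}"
  shows "\<bar>hom_density k EF n G - hom_density k EF n G'\<bar>
           \<le> real k * (real k - 1) / (real n * (real n - 1))"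
proof -
  have "\<phi> ` e \<in> G \<longleftrightarrow> \<phi> ` e \<in> G'" if "\<phi> ` e \<noteq> h" for \<phi> :: "nat \<Rightarrow> nat" and e
    using that assms(5) by blast
  then have "inj_hom k EF n G - hitting_injections k EF n h
      = inj_hom k EF n G' - hitting_injections k EF n h"
    unfolding inj_hom_eq hitting_injections_def by blast
  then have "\<bar>real (card (inj_hom k EF n G)) - real (card (inj_hom k EF n G'))\<bar>
      \<le> real (card (hitting_injections k EF n h))"
    using finite_injections
    by (intro abs_card_diff_le) (auto simp: inj_hom_eq hitting_injections_def)
  also have "\<dots> \<le> real k * (real k - 1) / (real n * (real n - 1)) * falling n k"
    by (rule card_hitting_injections[OF assms(1-4)])
  finally show ?thesis
    using falling_pos[OF assms(2)]
    by (simp add: hom_density_def diff_divide_distrib[symmetric] pos_divide_le_eq)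
qed


section \<open>The random graph \<open>G(x,H,\<kappa>)\<close>\<close>

lemma edge_val_bounds:
  assumes "standard_kernel \<kappa>" "\<forall>i\<in>{1..n}. x i \<in> {0..1}" "b \<in> all_pairs n"
  shows "0 \<le> edge_val \<kappa> x b" "edge_val \<kappa> x b \<le> 1"
proof -
  have b: "b \<subseteq> {1..n}" "card b = 2" using assms(3) by (auto simp: all_pairs_def)
  then have "finite b" "b \<noteq> {}" by (auto intro: finite_subset)
  then have "Min b \<in> {1..n}" "Max b \<in> {1..n}" using b(1) Min_in Max_in by blast+
  then have "x (Min b) \<in> {0..1}" "x (Max b) \<in> {0..1}" using assms(2) by blast+
  then show "0 \<le> edge_val \<kappa> x b" "edge_val \<kappa> x b \<le> 1"
    using assms(1) unfolding standard_kernel_def edge_val_def by auto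
qed

lemma prod_edge_val_bounds:
  assumes "standard_kernel \<kappa>" "\<forall>i\<in>{1..n}. x i \<in> {0..1}" "B \<subseteq> all_pairs n"
  shows "0 \<le> (\<Prod>b\<in>B. edge_val \<kappa> x b)" "(\<Prod>b\<in>B. edge_val \<kappa> x b) \<le> 1"
  using edge_val_bounds[OF assms(1,2)] assms(3) by (auto intro!: prod_nonneg prod_le_1)

lemma edge_val_comp_injection:
  assumes "standard_kernel \<kappa>" "\<forall>i\<in>{1..n}. x i \<in> {0..1}"
    and "\<phi> \<in> injections k n" "e \<subseteq> {1..k}" "card e = 2"
  shows "edge_val \<kappa> (x \<circ> \<phi>) e = edge_val \<kappa> x (\<phi> ` e)"
proof -
  obtain i j where ij: "e = {i, j}" "i < j"
    using assms(5) by (auto simp: card_2_iff) (metis insert_commute linorder_neqE_nat)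
  have ijk: "i \<in> {1..k}" "j \<in> {1..k}" using ij assms(4) by auto
  have "\<phi> i \<noteq> \<phi> j" using ij ijk injectionsD(2)[OF assms(3)] by (auto dest: inj_onD)
  moreover have "x (\<phi> i) \<in> {0..1}" "x (\<phi> j) \<in> {0..1}"
    using ijk injectionsD(1)[OF assms(3)] assms(2) by blast+
  \<comment> \<open>\<open>edge_val\<close> reads a pair in increasing order, which \<open>\<phi>\<close> need not preserve\<close>
  then have "\<kappa> (x (\<phi> i)) (x (\<phi> j)) = \<kappa> (x (\<phi> j)) (x (\<phi> i))"
    using assms(1) unfolding standard_kernel_def by auto
  ultimately show ?thesis
    using ij by (cases "\<phi> i < \<phi> j") (auto simp: edge_val_def min_def max_def)
qed

lemma T_F_comp_injection:
  assumes "standard_kernel \<kappa>" "\<forall>i\<in>{1..n}. x i \<in> {0..1}"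
    and "simple_graph_on {1..k} EF" "\<phi> \<in> injections k n"
  shows "T_F \<kappa> EF (x \<circ> \<phi>) = (\<Prod>b\<in>(\<lambda>e. \<phi> ` e) ` EF. edge_val \<kappa> x b)"
proof -
  have EF: "e \<subseteq> {1..k}" "card e = 2" if "e \<in> EF" for e
    using assms(3) that by (auto simp: simple_graph_on_def)
  have "inj_on (image \<phi>) EF"
    using inj_on_subset[OF inj_on_image_Pow[OF injectionsD(2)[OF assms(4)]]] EF by blast
  then show ?thesis
    unfolding T_F_def using edge_val_comp_injection[OF assms(1,2,4) EF]
    by (simp add: prod.reindex)
qed

lemma finite_set_pmf_random_graph: "finite (set_pmf (random_graph n x EH \<kappa>))"
  unfolding random_graph_def using finite_all_pairs by (simp add: set_Pi_pmf finite_PiE_dflt)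

lemma random_graph_concentration:
  fixes f :: "nat set set \<Rightarrow> real"
  assumes "EH \<subseteq> all_pairs n" "t > 0"
    and "\<And>G G' h. h \<in> all_pairs n \<Longrightarrow> G - {h} = G' - {h} \<Longrightarrow> \<bar>f G - f G'\<bar> \<le> c"
  shows "measure_pmf.prob (random_graph n x EH \<kappa>)
           {G. t \<le> \<bar>f G - measure_pmf.expectation (random_graph n x EH \<kappa>) f\<bar>}
         \<le> 2 * exp (- 2 * t\<^sup>2 / ((real (n choose 2) - real (card EH)) * c\<^sup>2))"
proof -
  define A where "A = all_pairs n - EH"
  define \<Phi> where "\<Phi> g = EH \<union> {e \<in> A. g e}" for g
  have "card EH \<le> n choose 2"
    using card_mono[OF finite_all_pairs assms(1)] by (simp add: card_all_pairs)
  then have card_A: "real (card A) = real (n choose 2) - real (card EH)"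
    using finite_subset[OF assms(1) finite_all_pairs]
    by (simp add: A_def card_Diff_subset[OF _ assms(1)] card_all_pairs of_nat_diff)
  have "\<bar>f (\<Phi> (g(a:=y))) - f (\<Phi> g)\<bar> \<le> c" if "a \<in> A" for g a y
    using that by (intro assms(3)[of a]) (auto simp: A_def \<Phi>_def)
  from McDiarmid_Pi_pmf_bool[of A t "\<lambda>g. f (\<Phi> g)" "\<lambda>_. c", OF _ assms(2)] this
  show ?thesis
    unfolding random_graph_def A_def[symmetric] \<Phi>_def[symmetric] card_A[symmetric]
    by (simp add: finite_all_pairs A_def vimage_def)
qed

lemma prob_random_graph_supset:
  assumes "standard_kernel \<kappa>" "\<forall>i\<in>{1..n}. x i \<in> {0..1}" "D \<subseteq> all_pairs n"
  shows "measure_pmf.prob (random_graph n x EH \<kappa>) {G. D \<subseteq> G} = (\<Prod>b\<in>D - EH. edge_val \<kappa> x b)"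
proof -
  define A where "A = all_pairs n - EH"
  define B where "B b = (if b \<in> D then {True} else UNIV)" for b
  have "(\<lambda>g. EH \<union> {e \<in> A. g e}) -` {G. D \<subseteq> G} = Pi A B"
    using assms(3) by (auto simp: A_def B_def Pi_def)
  then have "measure_pmf.prob (random_graph n x EH \<kappa>) {G. D \<subseteq> G}
      = (\<Prod>b\<in>A. measure_pmf.prob (bernoulli_pmf (edge_val \<kappa> x b)) (B b))"
    unfolding random_graph_def A_def[symmetric]
    by (simp add: measure_Pi_pmf_Pi A_def finite_all_pairs)
  also have "\<dots> = (\<Prod>b\<in>A. if b \<in> D then edge_val \<kappa> x b else 1)"
    using edge_val_bounds[OF assms(1,2)]
    by (intro prod.cong) (auto simp: A_def B_def measure_pmf_single)
  also have "\<dots> = (\<Prod>b\<in>D - EH. edge_val \<kappa> x b)"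
  proof -
    have "A \<inter> {b. b \<in> D} = D - EH" using assms(3) by (auto simp: A_def)
    then show ?thesis using finite_all_pairs by (simp add: prod.If_cases A_def)
  qed
  finally show ?thesis .
qed

lemma expectation_hom_density_random_graph:
  assumes "standard_kernel \<kappa>" "\<forall>i\<in>{1..n}. x i \<in> {0..1}" "simple_graph_on {1..k} EF"
  shows "measure_pmf.expectation (random_graph n x EH \<kappa>) (hom_density k EF n)
           = (\<Sum>\<phi>\<in>injections k n. \<Prod>b\<in>(\<lambda>e. \<phi> ` e) ` EF - EH. edge_val \<kappa> x b) / falling n k"
proof -
  define R where "R = random_graph n x EH \<kappa>"
  define D where "D \<phi> = (\<lambda>e. \<phi> ` e) ` EF" for \<phi> :: "nat \<Rightarrow> nat"
  have "real (card (inj_hom k EF n G)) = (\<Sum>\<phi>\<in>injections k n. indicator {G. D \<phi> \<subseteq> G} G)" for G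
    unfolding inj_hom_eq using sum.inter_filter[OF finite_injections, of "\<lambda>_. 1::real"]
    by (simp add: D_def indicator_def image_subset_iff of_bool_def)
  then have "measure_pmf.expectation R (hom_density k EF n)
      = measure_pmf.expectation R (\<lambda>G. \<Sum>\<phi>\<in>injections k n. indicator {G. D \<phi> \<subseteq> G} G) / falling n k"
    unfolding hom_density_def by (simp add: integral_divide_zero)
  also have "\<dots> = (\<Sum>\<phi>\<in>injections k n. measure_pmf.prob R {G. D \<phi> \<subseteq> G}) / falling n k"
    using finite_set_pmf_random_graph
    by (subst Bochner_Integration.integral_sum) (auto simp: R_def intro: integrable_measure_pmf_finite)
  also have "\<dots> = (\<Sum>\<phi>\<in>injections k n. \<Prod>b\<in>D \<phi> - EH. edge_val \<kappa> x b) / falling n k"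
  proof -
    have "D \<phi> \<subseteq> all_pairs n" if "\<phi> \<in> injections k n" for \<phi>
      using image_pair_in_all_pairs[OF that] assms(3) by (auto simp: D_def simple_graph_on_def)
    then show ?thesis
      unfolding R_def using prob_random_graph_supset[OF assms(1,2)] by simp
  qed
  finally show ?thesis unfolding R_def D_def .
qed

lemma expectation_hom_density_near_mu_F:
  assumes "standard_kernel \<kappa>" "\<forall>i\<in>{1..n}. x i \<in> {0..1}" "simple_graph_on {1..k} EF"
    and "k \<le> n" "2 \<le> n" "EH \<subseteq> all_pairs n"
  shows "\<bar>measure_pmf.expectation (random_graph n x EH \<kappa>) (hom_density k EF n) - mu_F \<kappa> k EF n x\<bar>
           \<le> real (card EH) * (real k * (real k - 1) / (real n * (real n - 1)))"
proof -
  define D where "D \<phi> = (\<lambda>e. \<phi> ` e) ` EF" for \<phi> :: "nat \<Rightarrow> nat"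
  define U where "U = (\<Union>h\<in>EH. hitting_injections k EF n h)"
  have fin: "finite EH" using assms(6) finite_all_pairs by (rule finite_subset)
  have "\<bar>(\<Prod>b\<in>D \<phi> - EH. edge_val \<kappa> x b) - T_F \<kappa> EF (x \<circ> \<phi>)\<bar> \<le> indicator U \<phi>"
    if \<phi>: "\<phi> \<in> injections k n" for \<phi>
  proof -
    have D: "D \<phi> \<subseteq> all_pairs n"
      using image_pair_in_all_pairs[OF \<phi>] assms(3) by (auto simp: D_def simple_graph_on_def)
    have T: "T_F \<kappa> EF (x \<circ> \<phi>) = (\<Prod>b\<in>D \<phi>. edge_val \<kappa> x b)"
      unfolding D_def by (rule T_F_comp_injection[OF assms(1,2,3) \<phi>])
    show ?thesis
    proof (cases "\<phi> \<in> U")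
      case False
      then have "D \<phi> - EH = D \<phi>" using \<phi> by (auto simp: U_def D_def hitting_injections_def)
      then show ?thesis using T False by simp
    next
      case True
      have "D \<phi> - EH \<subseteq> all_pairs n" using D by blast
      from prod_edge_val_bounds[OF assms(1,2) this] prod_edge_val_bounds[OF assms(1,2) D]
      show ?thesis using T True by (simp add: abs_le_iff)
    qed
  qed
  then have "\<bar>\<Sum>\<phi>\<in>injections k n. (\<Prod>b\<in>D \<phi> - EH. edge_val \<kappa> x b) - T_F \<kappa> EF (x \<circ> \<phi>)\<bar>
      \<le> (\<Sum>\<phi>\<in>injections k n. indicator U \<phi>)"
    by (intro order.trans[OF sum_abs] sum_mono)
  also have "\<dots> = real (card U)"
  proof -
    have "injections k n \<inter> {\<phi>. \<phi> \<in> U} = U" by (auto simp: U_def hitting_injections_def)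
    then show ?thesis using finite_injections by (simp add: indicator_def sum.If_cases)
  qed
  also have "\<dots> \<le> (\<Sum>h\<in>EH. real (card (hitting_injections k EF n h)))"
    unfolding U_def of_nat_sum[symmetric] of_nat_le_iff by (rule card_UN_le[OF fin])
  also have "\<dots> \<le> real (card EH) * (real k * (real k - 1) / (real n * (real n - 1)) * falling n k)"
    using card_hitting_injections[OF assms(3-5)] assms(6) by (intro sum_bounded_above) blast
  moreover have "measure_pmf.expectation (random_graph n x EH \<kappa>) (hom_density k EF n) - mu_F \<kappa> k EF n x
      = (\<Sum>\<phi>\<in>injections k n. (\<Prod>b\<in>D \<phi> - EH. edge_val \<kappa> x b) - T_F \<kappa> EF (x \<circ> \<phi>)) / falling n k"
    unfolding expectation_hom_density_random_graph[OF assms(1-3)] mu_F_def injections_def[symmetric]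
    by (simp add: D_def sum_subtractf diff_divide_distrib)
  ultimately show ?thesis
    using falling_pos[OF assms(4)] by (simp add: pos_divide_le_eq)
qed

theorem lemma1:
  fixes \<kappa> :: "real \<Rightarrow> real \<Rightarrow> real" and k n m :: nat and EF EH :: "nat set set"
    and x :: "nat \<Rightarrow> real" and \<epsilon> :: real
  assumes "standard_kernel \<kappa>"
    and "simple_graph_on {1..k} EF"
    and "simple_graph_on {1..n} EH"
    and "card EH = m"
    and "k \<le> n" and "2 \<le> n"
    and "\<forall>i\<in>{1..n}. x i \<in> {0..1}"
    and "\<epsilon> > real m * (real k * (real k - 1) / (real n * (real n - 1)))"
  shows "measure_pmf.prob (random_graph n x EH \<kappa>)
           {G. \<bar>hom_density k EF n G - mu_F \<kappa> k EF n x\<bar> > \<epsilon>}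
         \<le> 2 * exp (- (2 * (\<epsilon> - real m * (real k * (real k - 1) / (real n * (real n - 1))))\<^sup>2)
                 / ((real (n choose 2) - real m) * (real k * (real k - 1) / (real n * (real n - 1)))\<^sup>2))"
proof -
  define c where "c = real k * (real k - 1) / (real n * (real n - 1))"
  define R where "R = random_graph n x EH \<kappa>"
  define E where "E = measure_pmf.expectation R (hom_density k EF n)"
  have EH: "EH \<subseteq> all_pairs n"
    using assms(3) by (auto simp: simple_graph_on_def all_pairs_def)
  have "\<bar>E - mu_F \<kappa> k EF n x\<bar> \<le> real m * c"
    unfolding E_def R_def c_def assms(4)[symmetric]
    using expectation_hom_density_near_mu_F[OF assms(1,7,2,5,6) EH] .
  then have "{G. \<bar>hom_density k EF n G - mu_F \<kappa> k EF n x\<bar> > \<epsilon>}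
      \<subseteq> {G. \<epsilon> - real m * c \<le> \<bar>hom_density k EF n G - E\<bar>}"
    by auto
  then have "measure_pmf.prob R {G. \<bar>hom_density k EF n G - mu_F \<kappa> k EF n x\<bar> > \<epsilon>}
      \<le> measure_pmf.prob R {G. \<epsilon> - real m * c \<le> \<bar>hom_density k EF n G - E\<bar>}"
    by (rule measure_pmf.finite_measure_mono) simp
  also have "\<dots> \<le> 2 * exp (- 2 * (\<epsilon> - real m * c)\<^sup>2 / ((real (n choose 2) - real m) * c\<^sup>2))"
    unfolding R_def E_def c_def assms(4)[symmetric] using assms(4,8)
    by (intro random_graph_concentration[OF EH] hom_density_change_pair[OF assms(2,5,6)]) auto
  finally show ?thesis by (simp add: R_def c_def)
qed

end
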